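(* Let $T$ be a complete theory and $\phi,\psi$ formulas with $T\vdash\phi\,\mathtt u\,\psi$. Then $T\vdash\psi$, or there exists $m\in\omega$ such that $T\vdash\bigwedge_{i=0}^m[1]^i(\phi\wedge\neg\psi)\wedge[1]^{m+1}\psi$.
   Context: Fix $Var=\{p_n : n\in\omega\}$. The formulas of $L([1],[\omega],\mathtt u,\mathtt U)$ form the smallest set containing $Var$ and closed under $\neg\phi$, $[1]\phi$, $[\omega]\phi$, $(\phi\wedge\psi)$, $(\phi\,\mathtt u\,\psi)$, $(\phi\,\mathtt U\,\psi)$. Abbreviations: $\vee,\to,\leftrightarrow$ as usual; $\mathtt f\phi:=(\phi\to\phi)\,\mathtt u\,\phi$, $\mathtt g\phi:=\neg\mathtt f\neg\phi$; $[a]^0\phi:=\phi$, $[a]^{n+1}\phi:=[a][a]^n\phi$ for $a\in\{1,\omega\}$. A theory is a nonempty set of formulas. Proof system. Axioms: all instances of A1 substitution instances of classical tautologies; A2 $[1][\omega]\phi\leftrightarrow[\omega]\phi$; A3 $\neg[a]\phi\leftrightarrow[a]\neg\phi$ ($a\in\{1,\omega\}$); A4 $[a](\phi*\psi)\leftrightarrow([a]\phi*[a]\psi)$ ($a\in\{1,\omega\}$, $*\in\{\wedge,\vee,\to,\leftrightarrow\}$); A5 $\psi\to\phi\,\mathtt u\,\psi$; A6 $\phi\,\mathtt u\,\psi\to\phi\,\mathtt U\,\psi$; A7 $\big(\bigwedge_{k=0}^n[1]^k(\phi\wedge\neg\psi)\wedge[1]^{n+1}\psi\big)\to\phi\,\mathtt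 u\,\psi$ ($n\in\omega$); A8 $\big(\bigwedge_{k=0}^n[\omega]^k\mathtt g(\phi\wedge\neg\psi)\wedge[\omega]^{n+1}(\phi\,\mathtt u\,\psi)\big)\to\phi\,\mathtt U\,\psi$ ($n\in\omega$). Rules: R1 from $\phi$ and $\phi\to\psi$ infer $\psi$; R2 from $\phi$ infer $[a]\phi$, $a\in\{1,\omega\}$; R3 from $\theta\to\neg\psi$ and all $\theta\to\big(\bigvee_{k=0}^n[1]^k(\neg\phi\vee\psi)\vee[1]^{n+1}\neg\psi\big)$, $n\in\omega$, infer $\theta\to\neg(\phi\,\mathtt u\,\psi)$; R4 from $\theta\to\neg(\phi\,\mathtt u\,\psi)$ and all $\theta\to\big(\bigvee_{k=0}^n[\omega]^k\neg\mathtt g(\phi\wedge\neg\psi)\vee[\omega]^{n+1}\neg(\phi\,\mathtt u\,\psi)\big)$, $n\in\omega$, infer $\theta\to\neg(\phi\,\mathtt U\,\psi)$. $\vdash\phi$ ($\phi$ is a theorem) iff there is a sequence $(\phi_\beta)_{\beta\le\alpha}$, $\alpha$ a countable ordinal, with $\phi_\alpha=\phi$ and each $\phi_\beta$ an axiom or obtained from earlier members by a rule. $T\vdash\phi$ iff there is such a sequence in which each member is an axiom, a member of $T$, or obtained from earlier members by a rule, where R2 may only be applied to theorems. A theory $T$ is consistent iff there is no formula $\chi$ with $T\vdash\chi$ and $T\vdash\neg\chi$; $T$ is complete iff it is consistent and for every formula $\chi$, $T\vdash\chi$ or $T\vdash\neg\chi$. *)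

theory Defs
  imports Main
begin

datatype fm =
    Var nat
  | Neg fm
  | One fm
  | Om fm
  | Conj fm fm
  | Uu fm fm
  | UU fm fm

definition Or :: "fm \<Rightarrow> fm \<Rightarrow> fm" where
  "Or a b = Neg (Conj (Neg a) (Neg b))"
definition Imp :: "fm \<Rightarrow> fm \<Rightarrow> fm" where
  "Imp a b = Neg (Conj a (Neg b))"
definition Iff :: "fm \<Rightarrow> fm \<Rightarrow> fm" where
  "Iff a b = Conj (Imp a b) (Imp b a)"

definition Ff :: "fm \<Rightarrow> fm" where
  "Ff a = Uu (Imp a a) a"
definition Gg :: "fm \<Rightarrow> fm" where
  "Gg a = Neg (Ff (Neg a))"

datatype md = M1 | Mw

fun box :: "md \<Rightarrow> fm \<Rightarrow> fm" where
  "box M1 a = One a"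
| "box Mw a = Om a"

fun boxn :: "md \<Rightarrow> nat \<Rightarrow> fm \<Rightarrow> fm" where
  "boxn m 0 a = a"
| "boxn m (Suc n) a = box m (boxn m n a)"

fun bigconj :: "(nat \<Rightarrow> fm) \<Rightarrow> nat \<Rightarrow> fm" where
  "bigconj f 0 = f 0"
| "bigconj f (Suc n) = Conj (bigconj f n) (f (Suc n))"

fun bigdisj :: "(nat \<Rightarrow> fm) \<Rightarrow> nat \<Rightarrow> fm" where
  "bigdisj f 0 = f 0"
| "bigdisj f (Suc n) = Or (bigdisj f n) (f (Suc n))"

fun propositional :: "fm \<Rightarrow> bool" where
  "propositional (Var n) = True"
| "propositional (Neg a) = propositional a"
| "propositional (Conj a b) = (propositional a \<and> propositional b)"
| "propositional _ = False"

fun peval :: "(nat \<Rightarrow> bool) \<Rightarrow> fm \<Rightarrow> bool" where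
  "peval v (Var n) = v n"
| "peval v (Neg a) = (\<not> peval v a)"
| "peval v (Conj a b) = (peval v a \<and> peval v b)"
| "peval v _ = False"

fun subst :: "(nat \<Rightarrow> fm) \<Rightarrow> fm \<Rightarrow> fm" where
  "subst s (Var n) = s n"
| "subst s (Neg a) = Neg (subst s a)"
| "subst s (One a) = One (subst s a)"
| "subst s (Om a) = Om (subst s a)"
| "subst s (Conj a b) = Conj (subst s a) (subst s b)"
| "subst s (Uu a b) = Uu (subst s a) (subst s b)"
| "subst s (UU a b) = UU (subst s a) (subst s b)"

definition taut_instance :: "fm \<Rightarrow> bool" where
  "taut_instance \<chi> \<longleftrightarrow>
     (\<exists>t s. propositional t \<and> (\<forall>v. peval v t) \<and> \<chi> = subst s t)"

definition axiom :: "fm \<Rightarrow> bool" where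
  "axiom \<chi> \<longleftrightarrow>
     taut_instance \<chi>
   \<or> (\<exists>a. \<chi> = Iff (One (Om a)) (Om a))
   \<or> (\<exists>m a. \<chi> = Iff (Neg (box m a)) (box m (Neg a)))
   \<or> (\<exists>m a b. \<exists>op \<in> {Conj, Or, Imp, Iff}.
         \<chi> = Iff (box m (op a b)) (op (box m a) (box m b)))
   \<or> (\<exists>a b. \<chi> = Imp b (Uu a b))
   \<or> (\<exists>a b. \<chi> = Imp (Uu a b) (UU a b))
   \<or> (\<exists>a b n. \<chi> = Imp (Conj (bigconj (\<lambda>k. boxn M1 k (Conj a (Neg b))) n)
                              (boxn M1 (Suc n) b)) (Uu a b))
   \<or> (\<exists>a b n. \<chi> = Imp (Conj (bigconj (\<lambda>k. boxn Mw k (Gg (Conj a (Neg b)))) n)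
                              (boxn Mw (Suc n) (Uu a b))) (UU a b))"

text \<open>E: "is an earlier member of the sequence"; H: hypotheses (members of T);
  R2ok: the premises to which rule R2 may be applied.\<close>
definition justified ::
  "(fm \<Rightarrow> bool) \<Rightarrow> (fm \<Rightarrow> bool) \<Rightarrow> (fm \<Rightarrow> bool) \<Rightarrow> fm \<Rightarrow> bool" where
  "justified E H R2ok \<chi> \<longleftrightarrow>
     axiom \<chi>
   \<or> H \<chi>
   \<or> (\<exists>a. E a \<and> E (Imp a \<chi>))
   \<or> (\<exists>a m. E a \<and> R2ok a \<and> \<chi> = box m a)
   \<or> (\<exists>\<theta> a b. \<chi> = Imp \<theta> (Neg (Uu a b)) \<and> E (Imp \<theta> (Neg b)) \<and>
        (\<forall>n. E (Imp \<theta> (Or (bigdisj (\<lambda>k. boxn M1 k (Or (Neg a) b)) n)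
                              (boxn M1 (Suc n) (Neg b))))))
   \<or> (\<exists>\<theta> a b. \<chi> = Imp \<theta> (Neg (UU a b)) \<and> E (Imp \<theta> (Neg (Uu a b))) \<and>
        (\<forall>n. E (Imp \<theta> (Or (bigdisj (\<lambda>k. boxn Mw k (Neg (Gg (Conj a (Neg b))))) n)
                              (boxn Mw (Suc n) (Neg (Uu a b)))))))"

text \<open>A sequence indexed by a countable ordinal alpha+1 is represented by a
  well-order r on a set of natural numbers (the countable index set, order type
  alpha+1) together with a labelling f; last_ix is the last index.\<close>
definition valid_seq ::
  "(fm \<Rightarrow> bool) \<Rightarrow> (fm \<Rightarrow> bool) \<Rightarrow> nat rel \<Rightarrow> (nat \<Rightarrow> fm) \<Rightarrow> nat \<Rightarrow> bool" where
  "valid_seq H R2ok r f last_ix \<longleftrightarrow>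
     Well_order r \<and> last_ix \<in> Field r \<and> (\<forall>i\<in>Field r. (i, last_ix) \<in> r) \<and>
     (\<forall>i\<in>Field r. justified (\<lambda>a. \<exists>j. (j, i) \<in> r \<and> j \<noteq> i \<and> f j = a) H R2ok (f i))"

definition is_theorem :: "fm \<Rightarrow> bool" where
  "is_theorem \<phi> \<longleftrightarrow>
     (\<exists>r f last_ix. valid_seq (\<lambda>_. False) (\<lambda>_. True) r f last_ix \<and> f last_ix = \<phi>)"

definition derives :: "fm set \<Rightarrow> fm \<Rightarrow> bool" where
  "derives T \<phi> \<longleftrightarrow>
     (\<exists>r f last_ix. valid_seq (\<lambda>a. a \<in> T) is_theorem r f last_ix \<and> f last_ix = \<phi>)"

definition is_theory :: "fm set \<Rightarrow> bool" where
  "is_theory T \<longleftrightarrow> T \<noteq> {}"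

definition consistent :: "fm set \<Rightarrow> bool" where
  "consistent T \<longleftrightarrow> \<not> (\<exists>\<chi>. derives T \<chi> \<and> derives T (Neg \<chi>))"

definition complete :: "fm set \<Rightarrow> bool" where
  "complete T \<longleftrightarrow> consistent T \<and> (\<forall>\<chi>. derives T \<chi> \<or> derives T (Neg \<chi>))"

end

theory Submission
  imports Defs "HOL-Library.Countable_Set"
begin

text \<open>If T derived neither \<psi> nor any of the A7 antecedents, completeness would make it derive
  \<not>\<psi> and the negation of every antecedent. Pushing negations through the boxes with A3 and A4
  turns these into exactly the premises of the \<omega>-rule R3 (with a tautology as \<theta>), so T would
  derive \<not>(\<phi> u \<psi>), contradicting consistency.
  The substance lies in the infinitary notion of derivation: derivations indexed by countable
  well-orders are closed under rules with countably many premises, by concatenating the premise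
  derivations along an \<omega>-sum of well-orders and putting the conclusion on top; and by
  well-founded induction, every theorem is derivable from every theory.\<close>

instance fm :: countable by countable_datatype

section \<open>Sums of well-orders\<close>

lemma Well_orderD:
  assumes "Well_order r"
  shows "x \<in> Field r \<Longrightarrow> (x, x) \<in> r"
    and "(x, y) \<in> r \<Longrightarrow> (y, z) \<in> r \<Longrightarrow> (x, z) \<in> r"
    and "(x, y) \<in> r \<Longrightarrow> (y, x) \<in> r \<Longrightarrow> x = y"
    and "x \<in> Field r \<Longrightarrow> y \<in> Field r \<Longrightarrow> (x, y) \<in> r \<or> (y, x) \<in> r"
    and "wf (r - Id)"
proof -
  interpret wo_rel r using assms by (rule wo_rel.intro)
  show "x \<in> Field r \<Longrightarrow> (x, x) \<in> r" using REFL by (simp add: refl_on_def)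
  show "(x, y) \<in> r \<Longrightarrow> (y, z) \<in> r \<Longrightarrow> (x, z) \<in> r" using TRANS by (rule transD)
  show "(x, y) \<in> r \<Longrightarrow> (y, x) \<in> r \<Longrightarrow> x = y" using ANTISYM by (rule antisymD)
  show "x \<in> Field r \<Longrightarrow> y \<in> Field r \<Longrightarrow> (x, y) \<in> r \<or> (y, x) \<in> r" using TOTALS by blast
  show "wf (r - Id)" using WELL by (simp add: well_order_on_def)
qed

lemma Well_orderI:
  assumes "\<And>x. x \<in> Field r \<Longrightarrow> (x, x) \<in> r"
    and "\<And>x y z. (x, y) \<in> r \<Longrightarrow> (y, z) \<in> r \<Longrightarrow> (x, z) \<in> r"
    and "\<And>x y. (x, y) \<in> r \<Longrightarrow> (y, x) \<in> r \<Longrightarrow> x = y"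
    and "\<And>x y. x \<in> Field r \<Longrightarrow> y \<in> Field r \<Longrightarrow> (x, y) \<in> r \<or> (y, x) \<in> r"
    and "wf (r - Id)"
  shows "Well_order r"
proof -
  have "r \<subseteq> Field r \<times> Field r" by (auto intro: FieldI1 FieldI2)
  with assms show ?thesis
    unfolding well_order_on_def linear_order_on_def partial_order_on_def
      preorder_on_def refl_on_def trans_def antisym_def total_on_def by blast
qed

definition lexsum :: "(nat \<Rightarrow> 'a rel) \<Rightarrow> (nat \<times> 'a) rel" where
  "lexsum r = {((n, i), (m, j)). i \<in> Field (r n) \<and> j \<in> Field (r m) \<and>
                                 (n < m \<or> n = m \<and> (i, j) \<in> r n)}"

lemma mem_lexsum:
  "((n, i), (m, j)) \<in> lexsum r \<longleftrightarrow>
     i \<in> Field (r n) \<and> j \<in> Field (r m) \<and> (n < m \<or> n = m \<and> (i, j) \<in> r n)"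
  unfolding lexsum_def by auto

lemma Field_lexsum:
  assumes "\<And>n. Well_order (r n)"
  shows "Field (lexsum r) = (SIGMA n:UNIV. Field (r n))"
proof
  show "Field (lexsum r) \<subseteq> (SIGMA n:UNIV. Field (r n))"
    unfolding lexsum_def Field_def by auto
  show "(SIGMA n:UNIV. Field (r n)) \<subseteq> Field (lexsum r)"
  proof clarify
    fix n i assume "i \<in> Field (r n)"
    then have "((n, i), (n, i)) \<in> lexsum r"
      using Well_orderD(1)[OF assms] by (simp add: mem_lexsum)
    then show "(n, i) \<in> Field (lexsum r)" by (rule FieldI1)
  qed
qed

lemma wf_lexsum_minus_Id:
  assumes "\<And>n. wf (r n - Id)"
  shows "wf (lexsum r - Id)"
proof -
  let ?tagged = "\<lambda>n. {((n, i), (n, j)) | i j. (i, j) \<in> r n - Id}"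
  have "wf (\<Union>n. ?tagged n)"
  proof (rule wf_UN)
    show "wf (?tagged n)" for n
      by (rule wf_subset[OF wf_inv_image[OF assms, of n snd]]) auto
  qed auto
  then have "wf (inv_image (less_than <*lex*> (\<Union>n. ?tagged n)) (\<lambda>(n, i). (n, (n, i))))"
    by blast
  moreover have "lexsum r - Id \<subseteq> inv_image (less_than <*lex*> (\<Union>n. ?tagged n)) (\<lambda>(n, i). (n, (n, i)))"
    unfolding lexsum_def by auto
  ultimately show ?thesis by (rule wf_subset)
qed

lemma Well_order_lexsum:
  assumes wo: "\<And>n. Well_order (r n)"
  shows "Well_order (lexsum r)"
proof (rule Well_orderI)
  fix x y z
  show "x \<in> Field (lexsum r) \<Longrightarrow> (x, x) \<in> lexsum r"
    using Well_orderD(1)[OF wo] by (cases x) (simp add: Field_lexsum[OF wo] mem_lexsum)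
  show "(x, y) \<in> lexsum r \<Longrightarrow> (y, z) \<in> lexsum r \<Longrightarrow> (x, z) \<in> lexsum r"
    using Well_orderD(2)[OF wo] by (cases x; cases y; cases z) (auto simp: mem_lexsum)
  show "(x, y) \<in> lexsum r \<Longrightarrow> (y, x) \<in> lexsum r \<Longrightarrow> x = y"
    using Well_orderD(3)[OF wo] by (cases x; cases y) (auto simp: mem_lexsum)
  show "x \<in> Field (lexsum r) \<Longrightarrow> y \<in> Field (lexsum r) \<Longrightarrow>
        (x, y) \<in> lexsum r \<or> (y, x) \<in> lexsum r"
    using Well_orderD(4)[OF wo]
    by (cases x; cases y) (auto simp: mem_lexsum Field_lexsum[OF wo] nat_neq_iff, blast)
  show "wf (lexsum r - Id)"
    using Well_orderD(5)[OF wo] by (rule wf_lexsum_minus_Id)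
qed

definition add_top :: "'a rel \<Rightarrow> 'a option rel" where
  "add_top r = map_prod Some Some ` r \<union> insert None (Some ` Field r) \<times> {None}"

lemma mem_add_top:
  "(x, y) \<in> add_top r \<longleftrightarrow>
     y = None \<and> (x = None \<or> (\<exists>a\<in>Field r. x = Some a)) \<or>
     (\<exists>a b. (a, b) \<in> r \<and> x = Some a \<and> y = Some b)"
  unfolding add_top_def by auto

lemma Field_add_top: "Field (add_top r) = insert None (Some ` Field r)"
  unfolding add_top_def Field_def by force

lemma Well_order_add_top:
  assumes wo: "Well_order r"
  shows "Well_order (add_top r)"
proof (rule Well_orderI)
  fix x y z
  show "x \<in> Field (add_top r) \<Longrightarrow> (x, x) \<in> add_top r"
    using Well_orderD(1)[OF wo] unfolding Field_add_top mem_add_top by blast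
  show "(x, y) \<in> add_top r \<Longrightarrow> (y, z) \<in> add_top r \<Longrightarrow> (x, z) \<in> add_top r"
    using Well_orderD(2)[OF wo] unfolding mem_add_top by (blast intro: FieldI1)
  show "(x, y) \<in> add_top r \<Longrightarrow> (y, x) \<in> add_top r \<Longrightarrow> x = y"
    using Well_orderD(3)[OF wo] unfolding mem_add_top by blast
  show "x \<in> Field (add_top r) \<Longrightarrow> y \<in> Field (add_top r) \<Longrightarrow>
        (x, y) \<in> add_top r \<or> (y, x) \<in> add_top r"
    using Well_orderD(4)[OF wo] unfolding Field_add_top mem_add_top by blast
  have "wf (map_prod Some Some ` (r - Id) \<union> Some ` Field r \<times> {None})"
  proof (rule wf_Un)
    show "wf (map_prod Some Some ` (r - Id))"
      using Well_orderD(5)[OF wo] by (rule wf_map_prod_image) simp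
    show "wf (Some ` Field r \<times> {None})"
      by (rule wf_subset[of "measure (\<lambda>x. if x = None then 1 else 0)"]) auto
  qed auto
  moreover have "add_top r - Id = map_prod Some Some ` (r - Id) \<union> Some ` Field r \<times> {None}"
    unfolding add_top_def by auto
  ultimately show "wf (add_top r - Id)" by simp
qed

section \<open>Derivations indexed by countable well-orders\<close>

text \<open>The body of valid_seq over an arbitrary index type, so that premise derivations
  can be glued on (nat \<times> nat) option before being re-indexed by the naturals.\<close>

definition derivation ::
  "(fm \<Rightarrow> bool) \<Rightarrow> (fm \<Rightarrow> bool) \<Rightarrow> 'a rel \<Rightarrow> ('a \<Rightarrow> fm) \<Rightarrow> 'a \<Rightarrow> bool" where
  "derivation H R r f l \<longleftrightarrow>
     Well_order r \<and> l \<in> Field r \<and> (\<forall>i\<in>Field r. (i, l) \<in> r) \<and>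
     (\<forall>i\<in>Field r. justified (\<lambda>a. \<exists>j. (j, i) \<in> r \<and> j \<noteq> i \<and> f j = a) H R (f i))"

lemma valid_seq_eq_derivation: "valid_seq = derivation"
  by (intro ext) (simp add: valid_seq_def derivation_def)

definition provable :: "(fm \<Rightarrow> bool) \<Rightarrow> (fm \<Rightarrow> bool) \<Rightarrow> fm \<Rightarrow> bool" where
  "provable H R \<phi> \<longleftrightarrow> (\<exists>r f l. valid_seq H R r f l \<and> f l = \<phi>)"

lemma is_theorem_eq_provable: "is_theorem = provable (\<lambda>_. False) (\<lambda>_. True)"
  by (intro ext) (simp add: is_theorem_def provable_def)

lemma derives_eq_provable: "derives T = provable (\<lambda>a. a \<in> T) is_theorem"
  by (intro ext) (simp add: derives_def provable_def)

lemma justified_mono: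
  assumes "justified E H R \<chi>"
    and "\<And>a. E a \<Longrightarrow> E' a" and "\<And>a. H a \<Longrightarrow> H' a" and "\<And>a. E a \<Longrightarrow> R a \<Longrightarrow> R' a"
  shows "justified E' H' R' \<chi>"
  using assms unfolding justified_def by metis

lemma provable_if_derivation:
  fixes r :: "'a::countable rel"
  assumes der: "derivation H R r f l"
  shows "provable H R (f l)"
proof -
  let ?r = "dir_image r to_nat" and ?f = "f \<circ> from_nat"
  have mem: "(to_nat a, to_nat b) \<in> ?r \<longleftrightarrow> (a, b) \<in> r" for a b
    unfolding dir_image_def by auto
  have Field: "Field ?r = to_nat ` Field r"
    by (rule dir_image_Field)
  have "derivation H R ?r ?f (to_nat l)"
    unfolding derivation_def
  proof (intro conjI ballI)
    show "Well_order ?r"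
      using der by (auto simp: derivation_def intro: Well_order_dir_image inj_on_subset[OF inj_to_nat])
    show "to_nat l \<in> Field ?r"
      using der by (simp add: derivation_def Field)
    fix k assume "k \<in> Field ?r"
    then obtain i where i: "i \<in> Field r" and k: "k = to_nat i"
      by (auto simp: Field)
    show "(k, to_nat l) \<in> ?r"
      using der i k mem by (simp add: derivation_def)
    show "justified (\<lambda>a. \<exists>j. (j, k) \<in> ?r \<and> j \<noteq> k \<and> ?f j = a) H R (?f k)"
    proof (rule justified_mono)
      show "justified (\<lambda>a. \<exists>j. (j, i) \<in> r \<and> j \<noteq> i \<and> f j = a) H R (?f k)"
        using der i k by (simp add: derivation_def)
      show "\<exists>j. (j, k) \<in> ?r \<and> j \<noteq> k \<and> ?f j = a"
        if "\<exists>j. (j, i) \<in> r \<and> j \<noteq> i \<and> f j = a" for a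
      proof -
        from that obtain j where "(j, i) \<in> r" "j \<noteq> i" "f j = a" by blast
        then show ?thesis using k mem by (intro exI[of _ "to_nat j"]) simp
      qed
    qed
  qed
  then show ?thesis
    unfolding provable_def valid_seq_eq_derivation by force
qed

lemma derivation_add_top_lexsum:
  assumes der: "\<And>n. derivation H R (r n) (f n) (l n)"
    and just: "justified (\<lambda>a. \<exists>n. f n (l n) = a) H R \<chi>"
  shows "derivation H R (add_top (lexsum r))
           (\<lambda>x. case x of None \<Rightarrow> \<chi> | Some (n, i) \<Rightarrow> f n i) None"
proof -
  let ?r = "add_top (lexsum r)" and ?f = "\<lambda>x. case x of None \<Rightarrow> \<chi> | Some (n, i) \<Rightarrow> f n i"
  have wo: "Well_order (r n)" and l: "l n \<in> Field (r n)" for n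
    using der by (simp_all add: derivation_def)
  have Field: "Field ?r = insert None (Some ` (SIGMA n:UNIV. Field (r n)))"
    by (simp add: Field_add_top Field_lexsum[OF wo])
  show ?thesis
    unfolding derivation_def
  proof (intro conjI ballI)
    show "Well_order ?r"
      by (intro Well_order_add_top Well_order_lexsum wo)
    show "None \<in> Field ?r"
      by (simp add: Field)
    fix x assume x: "x \<in> Field ?r"
    show "(x, None) \<in> ?r"
      using x by (auto simp: Field mem_add_top Field_lexsum[OF wo])
    show "justified (\<lambda>a. \<exists>j. (j, x) \<in> ?r \<and> j \<noteq> x \<and> ?f j = a) H R (?f x)"
    proof (cases x)
      case None
      show ?thesis
        unfolding None option.case(1)
      proof (rule justified_mono[OF just])
        fix a assume "\<exists>n. f n (l n) = a"
        then obtain n where "f n (l n) = a" by blast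
        then show "\<exists>j. (j, None) \<in> ?r \<and> j \<noteq> None \<and> ?f j = a"
          using l by (intro exI[of _ "Some (n, l n)"]) (auto simp: mem_add_top Field_lexsum[OF wo])
      qed auto
    next
      case (Some p)
      then obtain n i where x_eq: "x = Some (n, i)" by (cases p) auto
      with x have i: "i \<in> Field (r n)" by (auto simp: Field)
      show ?thesis
        unfolding x_eq
      proof (rule justified_mono)
        show "justified (\<lambda>a. \<exists>j. (j, i) \<in> r n \<and> j \<noteq> i \<and> f n j = a) H R (?f (Some (n, i)))"
          using der i by (simp add: derivation_def)
        fix a assume "\<exists>j. (j, i) \<in> r n \<and> j \<noteq> i \<and> f n j = a"
        then obtain j where "(j, i) \<in> r n" "j \<noteq> i" "f n j = a" by blast
        then show "\<exists>j'. (j', Some (n, i)) \<in> ?r \<and> j' \<noteq> Some (n, i) \<and> ?f j' = a"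
          using i by (intro exI[of _ "Some (n, j)"]) (auto simp: mem_add_top mem_lexsum intro: FieldI1)
      qed auto
    qed
  qed
qed

lemma provable_countable_closed:
  assumes "countable P" and just: "justified (\<lambda>a. a \<in> P) H R \<chi>"
    and prem: "\<And>a. a \<in> P \<Longrightarrow> provable H R a"
  shows "provable H R \<chi>"
proof (cases "P = {}")
  case True
  have "Well_order (add_top ({} :: unit rel))"
    by (rule Well_order_add_top) simp
  then have "derivation H R (add_top {}) (\<lambda>_ :: unit option. \<chi>) None"
    using just True by (auto simp: derivation_def Field_add_top mem_add_top elim: justified_mono)
  then show ?thesis
    using provable_if_derivation by fastforce
next
  case False
  define g where "g = from_nat_into P"
  have range: "range g = P"
    unfolding g_def using False \<open>countable P\<close> by (rule range_from_nat_into)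
  have "\<forall>n. \<exists>(r :: nat rel) f l. derivation H R r f l \<and> f l = g n"
  proof
    fix n
    have "provable H R (g n)" using prem range by blast
    then show "\<exists>(r :: nat rel) f l. derivation H R r f l \<and> f l = g n"
      unfolding provable_def valid_seq_eq_derivation .
  qed
  then obtain r :: "nat \<Rightarrow> nat rel" and f l
    where der: "\<And>n. derivation H R (r n) (f n) (l n)"
    and last: "\<And>n. f n (l n) = g n"
    unfolding choice_iff by blast
  have "justified (\<lambda>a. \<exists>n. f n (l n) = a) H R \<chi>"
    using just by (rule justified_mono) (use last range in auto)
  with der have "derivation H R (add_top (lexsum r))
                   (\<lambda>x. case x of None \<Rightarrow> \<chi> | Some (n, i) \<Rightarrow> f n i) None"
    by (rule derivation_add_top_lexsum)
  then show ?thesis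
    using provable_if_derivation by fastforce
qed

section \<open>Rules of the calculus\<close>

lemma provable_axiom: "axiom \<phi> \<Longrightarrow> provable H R \<phi>"
  by (rule provable_countable_closed[of "{}"]) (simp_all add: justified_def)

lemma provable_mp:
  assumes "provable H R \<phi>" and "provable H R (Imp \<phi> \<psi>)"
  shows "provable H R \<psi>"
proof (rule provable_countable_closed[of "{\<phi>, Imp \<phi> \<psi>}"])
  show "justified (\<lambda>a. a \<in> {\<phi>, Imp \<phi> \<psi>}) H R \<psi>"
    unfolding justified_def by blast
qed (use assms in auto)

lemma provable_box:
  assumes "provable H R \<phi>" and "R \<phi>"
  shows "provable H R (box m \<phi>)"
proof (rule provable_countable_closed[of "{\<phi>}"])
  show "justified (\<lambda>a. a \<in> {\<phi>}) H R (box m \<phi>)"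
    using \<open>R \<phi>\<close> unfolding justified_def by blast
qed (use assms in auto)

abbreviation A7_conj :: "fm \<Rightarrow> fm \<Rightarrow> nat \<Rightarrow> fm" where
  "A7_conj \<phi> \<psi> n \<equiv>
     Conj (bigconj (\<lambda>i. boxn M1 i (Conj \<phi> (Neg \<psi>))) n) (boxn M1 (Suc n) \<psi>)"

abbreviation R3_disj :: "fm \<Rightarrow> fm \<Rightarrow> nat \<Rightarrow> fm" where
  "R3_disj \<phi> \<psi> n \<equiv>
     Or (bigdisj (\<lambda>k. boxn M1 k (Or (Neg \<phi>) \<psi>)) n) (boxn M1 (Suc n) (Neg \<psi>))"

lemma provable_R3:
  assumes "provable H R (Imp \<theta> (Neg \<psi>))" and "\<And>n. provable H R (Imp \<theta> (R3_disj \<phi> \<psi> n))"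
  shows "provable H R (Imp \<theta> (Neg (Uu \<phi> \<psi>)))"
proof (rule provable_countable_closed[of "insert (Imp \<theta> (Neg \<psi>)) (range (\<lambda>n. Imp \<theta> (R3_disj \<phi> \<psi> n)))"])
  show "justified (\<lambda>a. a \<in> insert (Imp \<theta> (Neg \<psi>)) (range (\<lambda>n. Imp \<theta> (R3_disj \<phi> \<psi> n))))
          H R (Imp \<theta> (Neg (Uu \<phi> \<psi>)))"
    unfolding justified_def by blast
qed (use assms in auto)

lemma provable_transfer:
  assumes "provable (\<lambda>_. False) R \<phi>"
    and R2: "\<And>a. provable (\<lambda>_. False) R a \<Longrightarrow> R a \<Longrightarrow> R' a"
  shows "provable H' R' \<phi>"
proof -
  obtain r :: "nat rel" and f l where der: "derivation (\<lambda>_. False) R r f l" and "f l = \<phi>"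
    using assms(1) unfolding provable_def valid_seq_eq_derivation by blast
  then have wf: "wf (r - Id)" and "l \<in> Field r"
    by (simp_all add: derivation_def Well_orderD(5))
  have "provable (\<lambda>_. False) R (f i) \<and> provable H' R' (f i)" if "i \<in> Field r" for i
    using that
  proof (induction i rule: wf_induct_rule[OF wf])
    case (1 i)
    let ?P = "{f j | j. (j, i) \<in> r \<and> j \<noteq> i}"
    have IH: "provable (\<lambda>_. False) R a \<and> provable H' R' a" if "a \<in> ?P" for a
      using that 1 by (blast intro: FieldI1)
    have "justified (\<lambda>a. \<exists>j. (j, i) \<in> r \<and> j \<noteq> i \<and> f j = a) (\<lambda>_. False) R (f i)"
      using der \<open>i \<in> Field r\<close> unfolding derivation_def by blast
    then have just: "justified (\<lambda>a. a \<in> ?P) (\<lambda>_. False) R (f i)"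
      by (rule justified_mono) auto
    have "countable ?P"
      by (rule countable_subset[of _ "range f"]) auto
    show ?case
    proof
      \<comment> \<open>the first claim is what licenses the uses of R2 in the second\<close>
      show "provable (\<lambda>_. False) R (f i)"
        using \<open>countable ?P\<close> just by (rule provable_countable_closed) (use IH in blast)
      have "justified (\<lambda>a. a \<in> ?P) H' R' (f i)"
        using just by (rule justified_mono) (use IH R2 in blast)+
      with \<open>countable ?P\<close> show "provable H' R' (f i)"
        by (rule provable_countable_closed) (use IH in blast)
    qed
  qed
  then show ?thesis
    using \<open>f l = \<phi>\<close> \<open>l \<in> Field r\<close> by blast
qed

lemma derives_if_is_theorem: "is_theorem \<phi> \<Longrightarrow> derives T \<phi>"
  unfolding derives_eq_provable
  by (rule provable_transfer) (simp_all add: is_theorem_eq_provable)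

section \<open>Propositional and modal reasoning\<close>

fun tval :: "(fm \<Rightarrow> bool) \<Rightarrow> fm \<Rightarrow> bool" where
  "tval w (Neg \<phi>) = (\<not> tval w \<phi>)"
| "tval w (Conj \<phi> \<psi>) = (tval w \<phi> \<and> tval w \<psi>)"
| "tval w \<phi> = w \<phi>"

lemma tval_Or [simp]: "tval w (Or \<phi> \<psi>) = (tval w \<phi> \<or> tval w \<psi>)"
  by (simp add: Or_def)

lemma tval_Imp [simp]: "tval w (Imp \<phi> \<psi>) = (tval w \<phi> \<longrightarrow> tval w \<psi>)"
  by (simp add: Imp_def)

lemma tval_Iff [simp]: "tval w (Iff \<phi> \<psi>) = (tval w \<phi> \<longleftrightarrow> tval w \<psi>)"
  by (auto simp: Iff_def)

lemma tval_box [simp]: "tval w (box m \<phi>) = w (box m \<phi>)"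
  by (cases m) simp_all

text \<open>Each replaced subformula is numbered by its own code, so that substituting from_nat
  recovers the formula.\<close>

fun skeleton :: "fm \<Rightarrow> fm" where
  "skeleton (Neg \<phi>) = Neg (skeleton \<phi>)"
| "skeleton (Conj \<phi> \<psi>) = Conj (skeleton \<phi>) (skeleton \<psi>)"
| "skeleton \<phi> = Var (to_nat \<phi>)"

lemma taut_instance_if_tval:
  assumes "\<And>w. tval w \<phi>"
  shows "taut_instance \<phi>"
proof -
  have "propositional (skeleton \<phi>)" by (induction \<phi>) auto
  moreover have "peval v (skeleton \<phi>) = tval (v \<circ> to_nat) \<phi>" for v by (induction \<phi>) auto
  moreover have "subst from_nat (skeleton \<phi>) = \<phi>" by (induction \<phi>) auto
  ultimately show ?thesis
    unfolding taut_instance_def using assms by metis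
qed

lemma provable_tautology: "(\<And>w. tval w \<phi>) \<Longrightarrow> provable H R \<phi>"
  by (intro provable_axiom) (simp add: axiom_def taut_instance_if_tval)

lemma provable_consequence:
  assumes "provable H R \<phi>" and "\<And>w. tval w \<phi> \<Longrightarrow> tval w \<psi>"
  shows "provable H R \<psi>"
  using assms(1) by (rule provable_mp) (simp add: assms(2) provable_tautology)

lemma provable_Conj:
  assumes "provable H R \<phi>" and "provable H R \<psi>"
  shows "provable H R (Conj \<phi> \<psi>)"
proof -
  have "provable H R (Imp \<phi> (Imp \<psi> (Conj \<phi> \<psi>)))"
    by (rule provable_tautology) simp
  with assms show ?thesis by (blast intro: provable_mp)
qed

lemma axiom_box_Neg: "axiom (Iff (Neg (box m \<phi>)) (box m (Neg \<phi>)))"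
  unfolding axiom_def by blast

lemma axiom_box_Iff: "axiom (Iff (box m (Iff \<phi> \<psi>)) (Iff (box m \<phi>) (box m \<psi>)))"
  unfolding axiom_def by blast

lemma is_theorem_boxn_Iff_Neg:
  assumes "is_theorem (Iff \<phi> (Neg \<psi>))"
  shows "is_theorem (Iff (boxn m k \<phi>) (Neg (boxn m k \<psi>)))"
  unfolding is_theorem_eq_provable
proof (induction k)
  case 0
  then show ?case using assms by (simp add: is_theorem_eq_provable)
next
  case (Suc k)
  let ?\<phi> = "boxn m k \<phi>" and ?\<psi> = "boxn m k \<psi>"
  have "provable (\<lambda>_. False) (\<lambda>_. True) (box m (Iff ?\<phi> (Neg ?\<psi>)))"
    using Suc by (rule provable_box) simp
  moreover have "provable (\<lambda>_. False) (\<lambda>_. True)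
                   (Iff (box m (Iff ?\<phi> (Neg ?\<psi>))) (Iff (box m ?\<phi>) (box m (Neg ?\<psi>))))"
    by (rule provable_axiom[OF axiom_box_Iff])
  moreover have "provable (\<lambda>_. False) (\<lambda>_. True) (Iff (Neg (box m ?\<psi>)) (box m (Neg ?\<psi>)))"
    by (rule provable_axiom[OF axiom_box_Neg])
  ultimately show ?case
    by (rule provable_consequence[OF provable_Conj[OF provable_Conj]]) auto
qed

lemma provable_bigdisj_Iff_Neg_bigconj:
  assumes "\<And>k. provable H R (Iff (B k) (Neg (A k)))"
  shows "provable H R (Iff (bigdisj B n) (Neg (bigconj A n)))"
proof (induction n)
  case 0
  then show ?case using assms by simp
next
  case (Suc n)
  then show ?case
    by (rule provable_consequence[OF provable_Conj[OF _ assms[of "Suc n"]]]) auto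
qed

lemma is_theorem_Neg_A7_conj_imp_R3_disj:
  "is_theorem (Imp (Neg (A7_conj \<phi> \<psi> n)) (R3_disj \<phi> \<psi> n))"
proof -
  have de_morgan: "is_theorem (Iff (Or (Neg \<phi>) \<psi>) (Neg (Conj \<phi> (Neg \<psi>))))"
    and refl: "is_theorem (Iff (Neg \<psi>) (Neg \<psi>))"
    unfolding is_theorem_eq_provable by (rule provable_tautology, simp)+
  have "provable (\<lambda>_. False) (\<lambda>_. True)
          (Iff (bigdisj (\<lambda>k. boxn M1 k (Or (Neg \<phi>) \<psi>)) n)
               (Neg (bigconj (\<lambda>i. boxn M1 i (Conj \<phi> (Neg \<psi>))) n)))"
    by (rule provable_bigdisj_Iff_Neg_bigconj)
      (rule is_theorem_boxn_Iff_Neg[OF de_morgan, unfolded is_theorem_eq_provable])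
  moreover have "provable (\<lambda>_. False) (\<lambda>_. True)
                   (Iff (boxn M1 (Suc n) (Neg \<psi>)) (Neg (boxn M1 (Suc n) \<psi>)))"
    using is_theorem_boxn_Iff_Neg[OF refl] unfolding is_theorem_eq_provable .
  ultimately show ?thesis
    unfolding is_theorem_eq_provable
    by (rule provable_consequence[OF provable_Conj]) auto
qed

lemma derives_Neg_Uu:
  assumes "derives T (Neg \<psi>)" and "\<And>n. derives T (Neg (A7_conj \<phi> \<psi> n))"
  shows "derives T (Neg (Uu \<phi> \<psi>))"
  unfolding derives_eq_provable
proof -
  let ?\<theta> = "Imp (Var 0) (Var 0)" and ?D = "provable (\<lambda>a. a \<in> T) is_theorem"
  have "?D (Imp ?\<theta> (Neg \<psi>))"
    using assms(1) unfolding derives_eq_provable by (rule provable_consequence) auto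
  moreover have "?D (Imp ?\<theta> (R3_disj \<phi> \<psi> n))" for n
    using assms(2)[of n] derives_if_is_theorem[OF is_theorem_Neg_A7_conj_imp_R3_disj[of \<phi> \<psi> n]]
    unfolding derives_eq_provable
    by (rule provable_consequence[OF provable_Conj]) auto
  ultimately have "?D (Imp ?\<theta> (Neg (Uu \<phi> \<psi>)))"
    by (rule provable_R3)
  then show "?D (Neg (Uu \<phi> \<psi>))"
    by (rule provable_consequence) auto
qed

theorem mainTheorem7:
  fixes T :: "fm set" and \<phi> \<psi> :: fm
  assumes "is_theory T" and "complete T" and "derives T (Uu \<phi> \<psi>)"
  shows "derives T \<psi> \<or>
         (\<exists>m. derives T (Conj (bigconj (\<lambda>i. boxn M1 i (Conj \<phi> (Neg \<psi>))) m)
                               (boxn M1 (Suc m) \<psi>)))"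
proof (rule ccontr)
  assume "\<not> ?thesis"
  with \<open>complete T\<close> have "derives T (Neg \<psi>)" and "\<And>n. derives T (Neg (A7_conj \<phi> \<psi> n))"
    unfolding complete_def by blast+
  then have "derives T (Neg (Uu \<phi> \<psi>))"
    by (rule derives_Neg_Uu)
  with \<open>complete T\<close> \<open>derives T (Uu \<phi> \<psi>)\<close> show False
    unfolding complete_def consistent_def by blast
qed

end
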